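(* Let $S = R\cup B$ be a finite set of points in the plane in general position (no three collinear), colored red ($R$) and blue ($B$), such that $R$ and $B$ are not linearly separable, $CH(B)\subset CH(R)$, $|R| = 3$ and $|B|\ge 2$. Then $S$ contains a balanced convex $4$-hole if and only if there is an edge $\overline{uv}$ of $CH(B)$ (with $u,v\in B$) such that one of the two open half-planes bounded by the line through $u$ and $v$ contains exactly two red points and no blue point.
   Context: A $4$-hole of $S$ is a simple quadrilateral with vertices in $S$ and no point of $S$ in its interior; it is convex if the quadrilateral is convex, and balanced if it has exactly two red and two blue vertices. $CH(X)$ denotes the convex hull of $X$. $R$ and $B$ are linearly separable if some line has all of $R$ strictly on one side and all of $B$ strictly on the other. *)

theory Defs
  imports "HOL-Analysis.Analysis"
begin

type_synonym point = "real \<times> real"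

definition general_position :: "point set \<Rightarrow> bool" where
  "general_position S \<longleftrightarrow>
     (\<forall>a\<in>S. \<forall>b\<in>S. \<forall>c\<in>S. a \<noteq> b \<and> a \<noteq> c \<and> b \<noteq> c \<longrightarrow> \<not> collinear {a, b, c})"

definition linearly_separable :: "point set \<Rightarrow> point set \<Rightarrow> bool" where
  "linearly_separable R B \<longleftrightarrow>
     (\<exists>w c. w \<noteq> 0 \<and> (\<forall>r\<in>R. inner w r < c) \<and> (\<forall>b\<in>B. inner w b > c))"

definition convex_position :: "point set \<Rightarrow> bool" where
  "convex_position Q \<longleftrightarrow> (\<forall>p\<in>Q. p \<notin> convex hull (Q - {p}))"

definition convex_4hole :: "point set \<Rightarrow> point set \<Rightarrow> bool" where
  "convex_4hole S Q \<longleftrightarrow> Q \<subseteq> S \<and> card Q = 4 \<and> convex_position Q \<and>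
     S \<inter> interior (convex hull Q) = {}"

definition balanced_convex_4hole :: "point set \<Rightarrow> point set \<Rightarrow> point set \<Rightarrow> bool" where
  "balanced_convex_4hole R B Q \<longleftrightarrow> convex_4hole (R \<union> B) Q \<and>
     card (Q \<inter> R) = 2 \<and> card (Q \<inter> B) = 2"

definition orient :: "point \<Rightarrow> point \<Rightarrow> point \<Rightarrow> real" where
  "orient u v p = (fst v - fst u) * (snd p - snd u) - (snd v - snd u) * (fst p - fst u)"

definition open_halfplanes :: "point \<Rightarrow> point \<Rightarrow> point set set" where
  "open_halfplanes u v = {{p. orient u v p > 0}, {p. orient u v p < 0}}"

definition hull_edge :: "point set \<Rightarrow> point \<Rightarrow> point \<Rightarrow> bool" where
  "hull_edge B u v \<longleftrightarrow> u \<in> B \<and> v \<in> B \<and> u \<noteq> v \<and> closed_segment u v face_of convex hull B"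

end

theory Submission
  imports Defs
begin

text \<open>Since CH(B) lies in the red triangle and S is in general position, every blue point
lies strictly inside the triangle r1 r2 r3, labelled counterclockwise. If a blue segment uv has
r1 and r2 strictly on one side and all of B on the other, then r3 lies on the blue side too,
and r1 r2 u v is an empty convex quadrilateral: r1 and r2 are vertices of the triangle, and every
other point of S lies beyond the line uv. Conversely, let s1 and s2 be the blue points touched
by the tangents from r1 and from r2 to CH(B) on the side facing the segment r1 r2. If s1 = s2,
this point lies inside every triangle r1 r2 w with w blue, so no quadrilateral r1 r2 u v is empty.
If s1 and s2 differ, the edge of CH(B) at s1 on the side of s2 separates r1 and r2 from B and r3.\<close>

lemma orient_cyclic: "orient a b c = orient b c a"
  by (simp add: orient_def algebra_simps)

lemma orient_swap: "orient b a c = - orient a b c"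
  by (simp add: orient_def algebra_simps)

lemma orient_swap_right: "orient a c b = - orient a b c"
  by (simp add: orient_def algebra_simps)

lemma orient_degenerate [simp]: "orient a b a = 0" "orient a b b = 0" "orient a a b = 0"
  by (simp_all add: orient_def)

lemma orient_reflect: "orient p q (2 *\<^sub>R p - z) = - orient p q z"
  by (simp add: orient_def algebra_simps)

lemma orient_reflect_middle: "orient p (2 *\<^sub>R p - q) z = - orient p q z"
  by (simp add: orient_def algebra_simps)

lemma orient_point_reflection: "orient p (2 *\<^sub>R p - q) (2 *\<^sub>R p - z) = orient p q z"
  by (simp add: orient_def algebra_simps)

definition orient_normal :: "point \<Rightarrow> point \<Rightarrow> point" where
  "orient_normal a b = (snd a - snd b, fst b - fst a)"

lemma orient_eq_inner: "orient a b p = orient_normal a b \<bullet> p + orient a b 0"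
  by (cases p) (simp add: orient_def orient_normal_def algebra_simps)

lemma orient_normal_eq_0_iff [simp]: "orient_normal a b = 0 \<longleftrightarrow> a = b"
  by (auto simp: orient_normal_def prod_eq_iff)

lemma orient_convex_comb3:
  assumes "u + v + w = 1"
  shows "orient a b (u *\<^sub>R x + v *\<^sub>R y + w *\<^sub>R z)
           = u * orient a b x + v * orient a b y + w * orient a b z"
proof -
  have w: "w = 1 - u - v" using assms by simp
  show ?thesis unfolding w by (simp add: orient_def algebra_simps)
qed

lemma collinear_if_orient_zero:
  assumes "orient a b c = 0"
  shows "collinear {a, b, c}"
proof (cases "a = c")
  case True
  then show ?thesis by (simp add: collinear_2 insert_commute)
next
  case False
  define d where "d = c - a"
  define t where "t = inner (b - a) d / inner d d"
  have "inner d d \<noteq> 0" using False by (simp add: d_def)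
  moreover have "inner d d *\<^sub>R (b - a) = inner (b - a) d *\<^sub>R d"
    using assms unfolding prod_eq_iff d_def by (simp add: orient_def inner_prod_def; algebra)
  ultimately have "b - a = t *\<^sub>R (c - a)"
    unfolding t_def d_def eq_vector_fraction_iff by simp
  then have "b = (1 - t) *\<^sub>R a + t *\<^sub>R c"
    by (simp add: algebra_simps)
  then show ?thesis
    by (auto simp: collinear_3_expand intro: exI[of _ "1 - t"])
qed

lemma orient_nonzero_if_general_position:
  assumes "general_position S" "x \<in> S" "y \<in> S" "z \<in> S" "x \<noteq> y" "x \<noteq> z" "y \<noteq> z"
  shows "orient x y z \<noteq> 0"
  using assms collinear_if_orient_zero unfolding general_position_def by blast

lemma orient_pluecker:
  "orient p x z * orient p e y = orient p x y * orient p e z + orient p y z * orient p e x"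
  unfolding orient_def by algebra

lemma angular_order_trans:
  assumes "0 < orient p e x" "0 < orient p e y" "0 < orient p e z"
    and "0 < orient p x y" "0 < orient p y z"
  shows "0 < orient p x z"
proof -
  have "0 < orient p x y * orient p e z + orient p y z * orient p e x"
    using assms by (simp add: add_pos_pos)
  then have "0 < orient p x z * orient p e y"
    by (simp only: orient_pluecker[of p x z e y])
  then show ?thesis
    using assms(2) by (simp add: zero_less_mult_iff)
qed

lemma finite_trans_total_has_least:
  assumes "finite A" "A \<noteq> {}"
    and "\<And>x y z. x \<in> A \<Longrightarrow> y \<in> A \<Longrightarrow> z \<in> A \<Longrightarrow> r x y \<Longrightarrow> r y z \<Longrightarrow> r x z"
    and "\<And>x y. x \<in> A \<Longrightarrow> y \<in> A \<Longrightarrow> x \<noteq> y \<Longrightarrow> r x y \<or> r y x"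
  shows "\<exists>m\<in>A. \<forall>y\<in>A - {m}. r m y"
  using assms
proof (induction A rule: finite_ne_induct)
  case (singleton x)
  then show ?case by simp
next
  case (insert x F)
  have "\<exists>m\<in>F. \<forall>y\<in>F - {m}. r m y"
    by (rule insert.IH) (use insert.prems in blast)+
  then obtain m where m: "m \<in> F" "\<forall>y\<in>F - {m}. r m y" by blast
  show ?case
  proof (cases "r x m")
    case True
    have "r x y" if "y \<in> F - {m}" for y
      using insert.prems(1)[of x m y] True m that by blast
    then have "\<forall>y\<in>insert x F - {x}. r x y" using True by blast
    then show ?thesis by blast
  next
    case False
    then have "r m x" using insert.prems(2)[of x m] m(1) insert.hyps by blast
    then show ?thesis using m by blast
  qed
qed

lemma angular_least:
  assumes "finite A" "A \<noteq> {}" "\<forall>x\<in>A. 0 < orient p e x"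
    and "\<forall>x\<in>A. \<forall>y\<in>A. x \<noteq> y \<longrightarrow> orient p x y \<noteq> 0"
  obtains m where "m \<in> A" "\<forall>y\<in>A - {m}. 0 < orient p m y"
proof -
  have "\<exists>m\<in>A. \<forall>y\<in>A - {m}. 0 < orient p m y"
  proof (rule finite_trans_total_has_least[OF assms(1,2)])
    show "0 < orient p x z"
      if "x \<in> A" "y \<in> A" "z \<in> A" "0 < orient p x y" "0 < orient p y z" for x y z
      using angular_order_trans[of p e x y z] assms(3) that by blast
    show "0 < orient p x y \<or> 0 < orient p y x" if "x \<in> A" "y \<in> A" "x \<noteq> y" for x y
      using assms(4) that orient_swap_right[of p x y] by fastforce
  qed
  then show ?thesis using that by blast
qed

lemma angular_greatest:
  assumes "finite A" "A \<noteq> {}" "\<forall>x\<in>A. 0 < orient p e x"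
    and "\<forall>x\<in>A. \<forall>y\<in>A. x \<noteq> y \<longrightarrow> orient p x y \<noteq> 0"
  obtains m where "m \<in> A" "\<forall>y\<in>A - {m}. 0 < orient p y m"
proof -
  have "\<exists>m\<in>A. \<forall>y\<in>A - {m}. 0 < orient p y m"
  proof (rule finite_trans_total_has_least[OF assms(1,2), where r = "\<lambda>x y. 0 < orient p y x"])
    show "0 < orient p z x"
      if "x \<in> A" "y \<in> A" "z \<in> A" "0 < orient p y x" "0 < orient p z y" for x y z
      using angular_order_trans[of p e z y x] assms(3) that by blast
    show "0 < orient p y x \<or> 0 < orient p x y" if "x \<in> A" "y \<in> A" "x \<noteq> y" for x y
      using assms(4) that orient_swap_right[of p x y] by fastforce
  qed
  then show ?thesis using that by blast
qed

lemma convex_orient_gt: "convex {p. c < orient a b p}"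
  using convex_halfspace_gt[of "c - orient a b 0" "orient_normal a b"]
  by (subst orient_eq_inner) (simp add: algebra_simps)

lemma convex_orient_lt: "convex {p. orient a b p < c}"
  using convex_halfspace_lt[of "orient_normal a b" "c - orient a b 0"]
  by (subst orient_eq_inner) (simp add: algebra_simps)

lemma convex_orient_ge: "convex {p. c \<le> orient a b p}"
  using convex_halfspace_ge[of "c - orient a b 0" "orient_normal a b"]
  by (subst orient_eq_inner) (simp add: algebra_simps)

lemma affine_orient_eq: "affine {p. orient a b p = c}"
  using affine_hyperplane[of "orient_normal a b" "c - orient a b 0"]
  by (subst orient_eq_inner) (simp add: algebra_simps)

lemma open_orient_gt: "open {p. c < orient a b p}"
  using open_halfspace_gt[of "c - orient a b 0" "orient_normal a b"]
  by (subst orient_eq_inner) (simp add: algebra_simps)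

lemma interior_orient_ge:
  assumes "a \<noteq> b"
  shows "interior {p. c \<le> orient a b p} = {p. c < orient a b p}"
proof -
  have "{p. c \<le> orient a b p} = {p. c - orient a b 0 \<le> orient_normal a b \<bullet> p}"
       "{p. c < orient a b p} = {p. c - orient a b 0 < orient_normal a b \<bullet> p}"
    by (subst orient_eq_inner; force)+
  then show ?thesis using assms by simp
qed

lemma orient_nonneg_if_in_triangle:
  assumes "p \<in> convex hull {a, b, c}" "0 < orient a b c"
  shows "0 \<le> orient a b p"
proof -
  obtain u v w where "0 \<le> w" "u + v + w = 1" "p = u *\<^sub>R a + v *\<^sub>R b + w *\<^sub>R c"
    using assms(1) unfolding convex_hull_3 by blast
  then have "orient a b p = w * orient a b c" by (simp add: orient_convex_comb3)
  then show ?thesis using \<open>0 \<le> w\<close> assms(2) by simp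
qed

lemma in_triangle_if_orient_nonneg:
  assumes "0 < orient a b c"
    and "0 \<le> orient a b p" "0 \<le> orient b c p" "0 \<le> orient c a p"
  shows "p \<in> convex hull {a, b, c}"
proof -
  define D where "D = orient a b c"
  have sum: "orient b c p / D + orient c a p / D + orient a b p / D = 1"
    using assms(1) unfolding D_def add_divide_distrib[symmetric] by (simp add: orient_def; algebra)
  have Dp: "D *\<^sub>R p = orient b c p *\<^sub>R a + orient c a p *\<^sub>R b + orient a b p *\<^sub>R c"
    unfolding D_def orient_def prod_eq_iff by (simp; algebra)
  have "p = inverse D *\<^sub>R (D *\<^sub>R p)"
    using assms(1) by (simp add: D_def)
  also have "\<dots> = (orient b c p / D) *\<^sub>R a + (orient c a p / D) *\<^sub>R b + (orient a b p / D) *\<^sub>R c"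
    unfolding Dp by (simp add: scaleR_add_right divide_inverse_commute)
  finally have "p = (orient b c p / D) *\<^sub>R a + (orient c a p / D) *\<^sub>R b + (orient a b p / D) *\<^sub>R c" .
  then show ?thesis
    unfolding convex_hull_3 using sum assms unfolding D_def by fastforce
qed

lemma open_triangle_subset_interior:
  assumes "0 < orient a b c"
  shows "{p. 0 < orient a b p \<and> 0 < orient b c p \<and> 0 < orient c a p}
           \<subseteq> interior (convex hull {a, b, c})"
proof (rule interior_maximal)
  show "{p. 0 < orient a b p \<and> 0 < orient b c p \<and> 0 < orient c a p} \<subseteq> convex hull {a, b, c}"
    using in_triangle_if_orient_nonneg[OF assms] by (auto simp: less_imp_le)
  have "{p. 0 < orient a b p \<and> 0 < orient b c p \<and> 0 < orient c a p}
          = {p. 0 < orient a b p} \<inter> {p. 0 < orient b c p} \<inter> {p. 0 < orient c a p}"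
    by blast
  then show "open {p. 0 < orient a b p \<and> 0 < orient b c p \<and> 0 < orient c a p}"
    by (simp add: open_Int open_orient_gt)
qed

lemma triangle_meets_line_at_vertex:
  assumes "p \<in> convex hull {x, y, z}" "orient a b p = 0" "orient a b z = 0"
    and "0 < orient a b x" "0 < orient a b y"
  shows "p = z"
proof -
  obtain u v w where uvw: "0 \<le> u" "0 \<le> v" "u + v + w = 1" "p = u *\<^sub>R x + v *\<^sub>R y + w *\<^sub>R z"
    using assms(1) unfolding convex_hull_3 by blast
  then have "u * orient a b x + v * orient a b y = 0"
    using assms(2,3) by (simp add: orient_convex_comb3)
  then have "u = 0" "v = 0"
    using uvw(1,2) assms(4,5) by (smt (verit) mult_pos_pos mult_nonneg_nonneg)+
  then show ?thesis using uvw by simp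
qed

lemma segment_face_of_convex_hull:
  assumes "finite B" "a \<in> B" "b \<in> B" "\<forall>z\<in>B - {a, b}. orient a b z < 0"
  shows "closed_segment a b face_of convex hull B"
proof -
  have "affine hull {a, b} \<subseteq> {p. orient a b p = 0}"
    by (rule hull_minimal) (auto simp: affine_orient_eq)
  moreover have "convex hull (B - {a, b}) \<subseteq> {p. orient a b p < 0}"
    by (rule hull_minimal) (use assms(4) convex_orient_lt in auto)
  ultimately have "affine hull {a, b} \<inter> convex hull (B - {a, b}) = {}"
    by force
  then show ?thesis
    unfolding segment_convex_hull using assms(1-3) by (intro face_of_convex_hulls) auto
qed

lemma extreme_point_of_subset:
  "x extreme_point_of T \<Longrightarrow> x \<in> S \<Longrightarrow> S \<subseteq> T \<Longrightarrow> x extreme_point_of S"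
  unfolding extreme_point_of_def by blast

lemma extreme_point_notin_convex_hull_Diff:
  assumes "x extreme_point_of convex hull S"
  shows "x \<notin> convex hull (S - {x})"
proof
  assume "x \<in> convex hull (S - {x})"
  moreover have "convex hull (S - {x}) \<subseteq> convex hull S" by (simp add: hull_mono)
  ultimately have "x extreme_point_of convex hull (S - {x})"
    using assms extreme_point_of_subset by blast
  then show False using extreme_point_of_convex_hull by blast
qed

text \<open>Both directions of the theorem are symmetric in the two red points playing the roles of
r1 and r2, so the counterclockwise labelling is no loss of generality.\<close>

locale ccw_red_triangle =
  fixes r1 r2 r3 :: point and B :: "point set"
  assumes finite_B: "finite B"
    and red_notin_B: "{r1, r2, r3} \<inter> B = {}"
    and general_position: "general_position ({r1, r2, r3} \<union> B)"
    and B_in_triangle: "B \<subseteq> convex hull {r1, r2, r3}"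
    and ccw: "0 < orient r1 r2 r3"
begin

lemma red_distinct: "r1 \<noteq> r2" "r1 \<noteq> r3" "r2 \<noteq> r3"
  using ccw by auto

lemma orient_nonzero:
  "x \<in> {r1, r2, r3} \<union> B \<Longrightarrow> y \<in> {r1, r2, r3} \<union> B \<Longrightarrow> z \<in> {r1, r2, r3} \<union> B \<Longrightarrow>
    x \<noteq> y \<Longrightarrow> x \<noteq> z \<Longrightarrow> y \<noteq> z \<Longrightarrow> orient x y z \<noteq> 0"
  using general_position by (rule orient_nonzero_if_general_position)

lemma blue_inside_triangle:
  assumes "x \<in> B"
  shows "0 < orient r1 r2 x" "0 < orient r2 r3 x" "0 < orient r3 r1 x"
proof -
  have x: "x \<in> convex hull {r1, r2, r3}" "x \<in> convex hull {r2, r3, r1}" "x \<in> convex hull {r3, r1, r2}"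
    using assms B_in_triangle by (auto simp: insert_commute)
  have "0 \<le> orient r1 r2 x" "0 \<le> orient r2 r3 x" "0 \<le> orient r3 r1 x"
    using orient_nonneg_if_in_triangle[OF x(1)] orient_nonneg_if_in_triangle[OF x(2)]
      orient_nonneg_if_in_triangle[OF x(3)] ccw orient_cyclic[of r1 r2 r3] orient_cyclic[of r2 r3 r1]
    by auto
  moreover have "orient r1 r2 x \<noteq> 0" "orient r2 r3 x \<noteq> 0" "orient r3 r1 x \<noteq> 0"
    using orient_nonzero[of r1 r2 x] orient_nonzero[of r2 r3 x] orient_nonzero[of r3 r1 x]
      assms red_notin_B red_distinct by blast+
  ultimately show "0 < orient r1 r2 x" "0 < orient r2 r3 x" "0 < orient r3 r1 x"
    by auto
qed

lemma red_extreme_point: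
  assumes "r \<in> {r1, r2, r3}"
  shows "r extreme_point_of convex hull {r1, r2, r3}"
proof -
  have "\<not> collinear {r1, r2, r3}"
    using general_position red_distinct unfolding general_position_def by blast
  then have "\<not> affine_dependent {r1, r2, r3}"
    by (simp add: collinear_3_eq_affine_dependent)
  then show ?thesis
    using assms by (simp add: extreme_point_of_convex_hull_affine_independent)
qed

lemma third_red_beyond_blue_line:
  assumes "u \<in> B" "v \<in> B" "u \<noteq> v" "0 < orient u v r1" "0 < orient u v r2"
  shows "orient u v r3 < 0"
proof (rule ccontr)
  assume "\<not> orient u v r3 < 0"
  moreover have "orient u v r3 \<noteq> 0"
    using orient_nonzero[of u v r3] assms(1-3) red_notin_B by blast
  ultimately have "{r1, r2, r3} \<subseteq> {p. 0 < orient u v p}"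
    using assms(4,5) by auto
  then have "convex hull {r1, r2, r3} \<subseteq> {p. 0 < orient u v p}"
    by (simp add: hull_minimal convex_orient_gt)
  then show False using assms(1) B_in_triangle by force
qed


lemma red_extreme_point_of_hull:
  assumes "r \<in> {r1, r2, r3}" "r \<in> Q" "Q \<subseteq> {r1, r2, r3} \<union> B"
  shows "r extreme_point_of convex hull Q"
proof (rule extreme_point_of_subset[OF red_extreme_point[OF assms(1)]])
  show "r \<in> convex hull Q" using assms(2) by (rule hull_inc)
  have "Q \<subseteq> convex hull {r1, r2, r3}"
    using assms(3) B_in_triangle hull_subset[of "{r1, r2, r3}" convex] by blast
  then show "convex hull Q \<subseteq> convex hull {r1, r2, r3}" by (simp add: hull_minimal)
qed

context
  fixes u v
  assumes u: "u \<in> B" and v: "v \<in> B" and "u \<noteq> v"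
    and red_left: "0 < orient u v r1" "0 < orient u v r2"
    and blue_right: "\<forall>z\<in>B. orient u v z \<le> 0"
begin

lemma convex_position_of_blue_line: "convex_position {r1, r2, u, v}"
  unfolding convex_position_def
proof
  fix p assume "p \<in> {r1, r2, u, v}"
  then consider "p \<in> {r1, r2}" | "p = u" | "p = v" by blast
  then show "p \<notin> convex hull ({r1, r2, u, v} - {p})"
  proof cases
    case 1
    then show ?thesis
      using u v by (intro extreme_point_notin_convex_hull_Diff red_extreme_point_of_hull) auto
  next
    case 2
    have "{r1, r2, u, v} - {p} = {r1, r2, v}"
      unfolding 2 using u v \<open>u \<noteq> v\<close> red_notin_B by auto
    then show ?thesis
      using triangle_meets_line_at_vertex[of u r1 r2 v u v] red_left 2 \<open>u \<noteq> v\<close> by auto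
  next
    case 3
    have "{r1, r2, u, v} - {p} = {r1, r2, u}"
      unfolding 3 using u v \<open>u \<noteq> v\<close> red_notin_B by auto
    then show ?thesis
      using triangle_meets_line_at_vertex[of v r1 r2 u u v] red_left 3 \<open>u \<noteq> v\<close> by auto
  qed
qed

lemma empty_interior_of_blue_line:
  "({r1, r2, r3} \<union> B) \<inter> interior (convex hull {r1, r2, u, v}) = {}"
proof -
  have "convex hull {r1, r2, u, v} \<subseteq> {p. 0 \<le> orient u v p}"
    using red_left by (intro hull_minimal) (auto simp: convex_orient_ge)
  then have "interior (convex hull {r1, r2, u, v}) \<subseteq> {p. 0 < orient u v p}"
    using interior_mono interior_orient_ge[OF \<open>u \<noteq> v\<close>] by blast
  moreover have "orient u v r3 < 0"
    using third_red_beyond_blue_line u v \<open>u \<noteq> v\<close> red_left by blast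
  moreover have "r \<notin> interior (convex hull {r1, r2, u, v})" if "r \<in> {r1, r2}" for r
    using that u v
    by (intro extreme_point_not_in_interior red_extreme_point_of_hull) auto
  ultimately show ?thesis
    using blue_right by (auto simp: not_less[symmetric])
qed

lemma balanced_convex_4hole_of_blue_line:
  "balanced_convex_4hole {r1, r2, r3} B {r1, r2, u, v}"
proof -
  have "{r1, r2, u, v} \<inter> {r1, r2, r3} = {r1, r2}" "{r1, r2, u, v} \<inter> B = {u, v}"
    using u v red_notin_B red_distinct by auto
  moreover have "r1 \<noteq> u" "r1 \<noteq> v" "r2 \<noteq> u" "r2 \<noteq> v"
    using u v red_notin_B by auto
  then have "card {r1, r2, u, v} = 4"
    using \<open>u \<noteq> v\<close> red_distinct by simp
  ultimately show ?thesis
    unfolding balanced_convex_4hole_def convex_4hole_def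
    using convex_position_of_blue_line empty_interior_of_blue_line u v \<open>u \<noteq> v\<close> red_distinct
    by simp
qed

end

lemma tangent_from_r1:
  assumes "B \<noteq> {}"
  obtains s where "s \<in> B" "\<forall>y\<in>B - {s}. 0 < orient r1 s y"
proof (rule angular_least[OF finite_B assms])
  show "\<forall>x\<in>B. 0 < orient r1 r2 x" using blue_inside_triangle by blast
  show "\<forall>x\<in>B. \<forall>y\<in>B. x \<noteq> y \<longrightarrow> orient r1 x y \<noteq> 0"
    using orient_nonzero red_notin_B by blast
qed

lemma tangent_from_r2:
  assumes "B \<noteq> {}"
  obtains s where "s \<in> B" "\<forall>y\<in>B - {s}. 0 < orient r2 y s"
proof (rule angular_greatest[OF finite_B assms])
  show "\<forall>x\<in>B. 0 < orient r2 r3 x" using blue_inside_triangle by blast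
  show "\<forall>x\<in>B. \<forall>y\<in>B. x \<noteq> y \<longrightarrow> orient r2 x y \<noteq> 0"
    using orient_nonzero red_notin_B by blast
qed

lemma common_tangent_in_interior:
  assumes "t \<in> B" "\<forall>y\<in>B - {t}. 0 < orient r1 t y" "\<forall>y\<in>B - {t}. 0 < orient r2 y t"
    and "w \<in> B" "w \<noteq> t"
  shows "t \<in> interior (convex hull {r1, r2, w})"
proof (rule subsetD[OF open_triangle_subset_interior])
  show "0 < orient r1 r2 w" using assms(4) blue_inside_triangle by blast
  show "t \<in> {p. 0 < orient r1 r2 p \<and> 0 < orient r2 w p \<and> 0 < orient w r1 p}"
    using assms blue_inside_triangle(1)[of t] orient_cyclic[of w r1 t] by auto
qed

lemma orient_beyond_r1_tangent:
  assumes "s \<in> B" "\<forall>y\<in>B - {s}. 0 < orient r1 s y" "z \<in> B - {s}"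
  shows "0 < orient s (2 *\<^sub>R s - r1) z"
proof -
  have "0 < orient r1 s z" using assms(2,3) by blast
  then show ?thesis
    using orient_reflect_middle[of s r1 z] orient_cyclic[of s r1 z] orient_swap_right[of r1 s z]
    by simp
qed

lemma r2_left_of_edge_at_r1_tangent:
  assumes s1: "s1 \<in> B" "\<forall>y\<in>B - {s1}. 0 < orient r1 s1 y"
    and s2: "s2 \<in> B" "\<forall>y\<in>B - {s2}. 0 < orient r2 y s2" "s1 \<noteq> s2"
    and b: "b \<in> B - {s1}" "\<forall>z\<in>B - {s1} - {b}. 0 < orient s1 z b"
  shows "0 < orient s1 b r2"
proof (rule ccontr)
  \<comment> \<open>Otherwise the reflection of r2 in s1 would lie in the angular range of B around s1,
    and s1 instead of s2 would be the tangent point seen from r2.\<close>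
  assume "\<not> 0 < orient s1 b r2"
  moreover have "orient s1 b r2 \<noteq> 0"
    using orient_nonzero[of s1 b r2] s1 b red_notin_B by blast
  ultimately have "orient s1 b r2 < 0" by linarith
  define e where "e = 2 *\<^sub>R s1 - r1"
  define r2' where "r2' = 2 *\<^sub>R s1 - r2"
  have e_r2': "0 < orient s1 e r2'"
    unfolding e_def r2'_def orient_point_reflection orient_cyclic[of s1]
    using blue_inside_triangle(1)[OF s1(1)] orient_cyclic[of r1 r2 s1] by simp
  have b_r2': "0 < orient s1 b r2'"
    unfolding r2'_def orient_reflect using \<open>orient s1 b r2 < 0\<close> by simp
  have "0 < orient s1 s2 r2'"
  proof (cases "s2 = b")
    case True
    then show ?thesis using b_r2' by simp
  next
    case False
    then have "0 < orient s1 s2 b" using b s2 by blast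
    then show ?thesis
      using angular_order_trans[OF _ _ e_r2' _ b_r2'] orient_beyond_r1_tangent[OF s1] s2 b
      unfolding e_def by blast
  qed
  then have "orient r2 s1 s2 < 0"
    unfolding r2'_def orient_reflect using orient_cyclic[of r2 s1 s2] by simp
  moreover have "0 < orient r2 s1 s2" using s2 s1(1) by blast
  ultimately show False by linarith
qed

lemma hull_edge_at_r1_tangent:
  assumes s1: "s1 \<in> B" "\<forall>y\<in>B - {s1}. 0 < orient r1 s1 y"
    and s2: "s2 \<in> B" "\<forall>y\<in>B - {s2}. 0 < orient r2 y s2" "s1 \<noteq> s2"
  obtains b where "hull_edge B s1 b" "0 < orient s1 b r1" "0 < orient s1 b r2"
    "\<forall>z\<in>B. orient s1 b z \<le> 0"
proof -
  have "B - {s1} \<noteq> {}" using s2 by blast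
  moreover have "\<forall>z\<in>B - {s1}. 0 < orient s1 (2 *\<^sub>R s1 - r1) z"
    using orient_beyond_r1_tangent[OF s1] by blast
  moreover have "\<forall>x\<in>B - {s1}. \<forall>y\<in>B - {s1}. x \<noteq> y \<longrightarrow> orient s1 x y \<noteq> 0"
    using orient_nonzero s1(1) by blast
  \<comment> \<open>The angularly last blue point seen from s1 is the hull neighbour of s1.\<close>
  ultimately obtain b where b: "b \<in> B - {s1}" "\<forall>z\<in>B - {s1} - {b}. 0 < orient s1 z b"
    using angular_greatest[of "B - {s1}"] finite_B by blast
  have below: "\<forall>z\<in>B - {s1, b}. orient s1 b z < 0"
    using b(2) orient_swap_right[of s1 b] by fastforce
  have "hull_edge B s1 b"
    unfolding hull_edge_def using b s1(1) below finite_B segment_face_of_convex_hull by blast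
  moreover have "0 < orient s1 b r1"
    using s1(2) b(1) orient_cyclic[of r1 s1 b] by force
  moreover have "0 < orient s1 b r2"
    using r2_left_of_edge_at_r1_tangent[OF s1 s2 b] .
  moreover have "\<forall>z\<in>B. orient s1 b z \<le> 0"
  proof
    fix z assume "z \<in> B"
    then show "orient s1 b z \<le> 0"
      using below by (cases "z \<in> {s1, b}") (auto simp: less_imp_le)
  qed
  ultimately show ?thesis using that by blast
qed

lemma red_split_by_blue_line:
  assumes "u \<in> B" "v \<in> B" "u \<noteq> v" "0 < orient u v r1" "0 < orient u v r2"
  shows "card ({r1, r2, r3} \<inter> {p. 0 < orient u v p}) = 2"
proof -
  have "{r1, r2, r3} \<inter> {p. 0 < orient u v p} = {r1, r2}"
    using third_red_beyond_blue_line[OF assms] assms(4,5) by auto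
  then show ?thesis using red_distinct by simp
qed

lemma separating_hull_edge_of_hole:
  assumes "u \<in> B" "v \<in> B" "u \<noteq> v"
    and empty: "({r1, r2, r3} \<union> B) \<inter> interior (convex hull {r1, r2, u, v}) = {}"
  shows "\<exists>a b. hull_edge B a b \<and> card ({r1, r2, r3} \<inter> {p. 0 < orient a b p}) = 2
           \<and> B \<inter> {p. 0 < orient a b p} = {}"
proof -
  have "B \<noteq> {}" using assms(1) by blast
  obtain s1 where s1: "s1 \<in> B" "\<forall>y\<in>B - {s1}. 0 < orient r1 s1 y"
    using tangent_from_r1[OF \<open>B \<noteq> {}\<close>] by blast
  obtain s2 where s2: "s2 \<in> B" "\<forall>y\<in>B - {s2}. 0 < orient r2 y s2"
    using tangent_from_r2[OF \<open>B \<noteq> {}\<close>] by blast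
  have "s1 \<noteq> s2"
  proof
    assume "s1 = s2"
    obtain w where w: "w \<in> {u, v}" "w \<noteq> s1" using \<open>u \<noteq> v\<close> by blast
    then have "s1 \<in> interior (convex hull {r1, r2, w})"
      using common_tangent_in_interior s1 s2 \<open>s1 = s2\<close> assms(1,2) by blast
    also have "\<dots> \<subseteq> interior (convex hull {r1, r2, u, v})"
      using w by (intro interior_mono hull_mono) auto
    finally show False using empty s1(1) by blast
  qed
  then obtain b where b: "hull_edge B s1 b" "0 < orient s1 b r1" "0 < orient s1 b r2"
    "\<forall>z\<in>B. orient s1 b z \<le> 0"
    using hull_edge_at_r1_tangent[OF s1 s2] by blast
  then have "card ({r1, r2, r3} \<inter> {p. 0 < orient s1 b p}) = 2"
    using red_split_by_blue_line unfolding hull_edge_def by blast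
  moreover have "B \<inter> {p. 0 < orient s1 b p} = {}"
    using b(4) by force
  ultimately show ?thesis using b(1) by blast
qed

end

lemma hull_edge_commute: "hull_edge B u v \<longleftrightarrow> hull_edge B v u"
  unfolding hull_edge_def by (auto simp: closed_segment_commute)

lemma ex_hull_edge_open_halfplane_iff:
  "(\<exists>u v. hull_edge B u v \<and> (\<exists>H\<in>open_halfplanes u v. P H)) \<longleftrightarrow>
   (\<exists>u v. hull_edge B u v \<and> P {p. 0 < orient u v p})"
proof -
  have "{p. orient u v p < 0} = {p. 0 < orient v u p}" for u v
    using orient_swap[of v u] by force
  then show ?thesis
    unfolding open_halfplanes_def by (metis hull_edge_commute insert_iff singletonD)
qed

lemma card_3_obtain_third:
  assumes "card R = 3" "a \<in> R" "b \<in> R" "a \<noteq> b"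
  obtains c where "R = {a, b, c}" "c \<noteq> a" "c \<noteq> b"
proof -
  have "card (R - {a, b}) = 1"
    using assms by (simp add: card_Diff_subset)
  then obtain c where "R - {a, b} = {c}" by (rule card_1_singletonE)
  then show ?thesis using that assms(2,3) by blast
qed

lemma balanced_convex_4hole_vertices:
  assumes "balanced_convex_4hole R B Q"
  obtains r1 r2 u v where "Q = {r1, r2, u, v}" "r1 \<in> R" "r2 \<in> R" "r1 \<noteq> r2"
    "u \<in> B" "v \<in> B" "u \<noteq> v" "(R \<union> B) \<inter> interior (convex hull Q) = {}"
proof -
  have Q: "Q \<subseteq> R \<union> B" "(R \<union> B) \<inter> interior (convex hull Q) = {}"
    "card (Q \<inter> R) = 2" "card (Q \<inter> B) = 2"
    using assms unfolding balanced_convex_4hole_def convex_4hole_def by simp_all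
  obtain r1 r2 where r: "Q \<inter> R = {r1, r2}" "r1 \<noteq> r2"
    using Q(3) by (meson card_2_iff)
  obtain u v where b: "Q \<inter> B = {u, v}" "u \<noteq> v"
    using Q(4) by (meson card_2_iff)
  have "Q = {r1, r2, u, v}" using Q(1) r(1) b(1) by blast
  moreover have "r1 \<in> R" "r2 \<in> R" "u \<in> B" "v \<in> B" using r(1) b(1) by blast+
  ultimately show ?thesis using that r(2) b(2) Q(2) by blast
qed

locale blue_in_red_triangle =
  fixes R B :: "point set"
  assumes finite_B: "finite B"
    and disjoint: "R \<inter> B = {}"
    and general_position: "general_position (R \<union> B)"
    and B_in_hull: "B \<subseteq> convex hull R"
    and card_R: "card R = 3"
begin

lemma ccw_labelling:
  assumes "R = {a, b, c}" "a \<noteq> b" "a \<noteq> c" "b \<noteq> c"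
  shows "ccw_red_triangle a b c B \<or> ccw_red_triangle b a c B"
proof -
  have "orient a b c \<noteq> 0"
    using orient_nonzero_if_general_position[OF general_position] assms by blast
  then have "0 < orient a b c \<or> 0 < orient b a c"
    using orient_swap[of b a c] by linarith
  moreover have "{b, a, c} = R" using assms(1) by auto
  ultimately show ?thesis
    using assms(1) finite_B disjoint general_position B_in_hull
    unfolding ccw_red_triangle_def by auto
qed

lemma separating_hull_edge_of_balanced_hole:
  assumes "balanced_convex_4hole R B Q"
  shows "\<exists>u v. hull_edge B u v \<and>
           card (R \<inter> {p. 0 < orient u v p}) = 2 \<and> B \<inter> {p. 0 < orient u v p} = {}"
proof -
  obtain r1 r2 u v where hole: "Q = {r1, r2, u, v}" "r1 \<in> R" "r2 \<in> R" "r1 \<noteq> r2"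
    "u \<in> B" "v \<in> B" "u \<noteq> v" "(R \<union> B) \<inter> interior (convex hull Q) = {}"
    using assms by (rule balanced_convex_4hole_vertices)
  obtain r3 where R: "R = {r1, r2, r3}" "r3 \<noteq> r1" "r3 \<noteq> r2"
    using card_3_obtain_third[OF card_R hole(2-4)] .
  have empty: "({r1, r2, r3} \<union> B) \<inter> interior (convex hull {r1, r2, u, v}) = {}"
    using hole(8) unfolding hole(1) R(1) .
  have swap: "{r2, r1, r3} = {r1, r2, r3}" "{r2, r1, u, v} = {r1, r2, u, v}"
    by auto
  from ccw_labelling[OF R(1) hole(4) R(2,3)[symmetric]] show ?thesis
  proof
    assume "ccw_red_triangle r1 r2 r3 B"
    from ccw_red_triangle.separating_hull_edge_of_hole[OF this hole(5-7) empty]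
    show ?thesis unfolding R(1) .
  next
    assume "ccw_red_triangle r2 r1 r3 B"
    from ccw_red_triangle.separating_hull_edge_of_hole[OF this hole(5-7)] empty
    show ?thesis unfolding R(1) swap by blast
  qed
qed

lemma balanced_hole_of_separating_hull_edge:
  assumes "hull_edge B u v" "card (R \<inter> {p. 0 < orient u v p}) = 2"
    and "B \<inter> {p. 0 < orient u v p} = {}"
  shows "\<exists>Q. balanced_convex_4hole R B Q"
proof -
  obtain r1 r2 where red: "R \<inter> {p. 0 < orient u v p} = {r1, r2}" "r1 \<noteq> r2"
    using assms(2) by (meson card_2_iff)
  obtain r3 where R: "R = {r1, r2, r3}" "r3 \<noteq> r1" "r3 \<noteq> r2"
    using card_3_obtain_third[OF card_R _ _ red(2)] red(1) by blast
  have line: "u \<in> B" "v \<in> B" "u \<noteq> v" "0 < orient u v r1" "0 < orient u v r2"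
    "\<forall>z\<in>B. orient u v z \<le> 0"
    using assms(1,3) red(1) unfolding hull_edge_def by (auto simp: not_less[symmetric])
  have swap: "{r2, r1, r3} = {r1, r2, r3}" "{r2, r1, u, v} = {r1, r2, u, v}"
    by auto
  from ccw_labelling[OF R(1) red(2) R(2,3)[symmetric]] show ?thesis
  proof
    assume "ccw_red_triangle r1 r2 r3 B"
    from ccw_red_triangle.balanced_convex_4hole_of_blue_line[OF this line]
    show ?thesis unfolding R(1) by blast
  next
    assume "ccw_red_triangle r2 r1 r3 B"
    from ccw_red_triangle.balanced_convex_4hole_of_blue_line[OF this line(1-3,5,4,6)]
    show ?thesis unfolding R(1) swap by blast
  qed
qed

end

theorem lemma6:
  fixes R B :: "point set"
  assumes "finite R" and "finite B" and "R \<inter> B = {}"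
    and "general_position (R \<union> B)"
    and "\<not> linearly_separable R B"
    and "convex hull B \<subseteq> convex hull R"
    and "card R = 3" and "card B \<ge> 2"
  shows "(\<exists>Q. balanced_convex_4hole R B Q) \<longleftrightarrow>
         (\<exists>u v. hull_edge B u v \<and>
            (\<exists>H\<in>open_halfplanes u v. card (R \<inter> H) = 2 \<and> B \<inter> H = {}))"
proof -
  \<comment> \<open>Non-separability follows from CH(B) being inside CH(R).\<close>
  have "B \<subseteq> convex hull R" using assms(6) hull_subset[of B convex] by blast
  then interpret blue_in_red_triangle R B
    using assms(2-4,7) by unfold_locales
  show ?thesis
    unfolding ex_hull_edge_open_halfplane_iff
    using separating_hull_edge_of_balanced_hole balanced_hole_of_separating_hull_edge by blast
qed

end
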